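(* Let $c_1,c_2\in\mathbb{R}$ with $c_1c_2\neq0$, let $c_{2k-1}=c_1$, $c_{2k}=c_2$ for $k\in\mathbb{N}$, and let $J$ be the self-adjoint operator in $l^2(\mathbb{N})$ given by the Jacobi matrix with diagonal entries $q_n=n$ and off-diagonal entries $\lambda_n=c_nn$, i.e. $(Ju)_1=u_1+c_1u_2$, $(Ju)_n=\lambda_{n-1}u_{n-1}+nu_n+\lambda_nu_{n+1}$ for $n\ge2$, on its natural domain $\{u\in l^2(\mathbb{N}):Ju\in l^2(\mathbb{N})\}$. Then: 1. If $|c_1|+|c_2|>1$, the operator $J$ is not semibounded. 2. If $|c_1|+|c_2|\le1$, the operator $J$ is semibounded from below. *)

theory Defs
  imports Complex_Main
begin

text \<open>Sequences in l^2(N) are modelled as functions nat => real, where index k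
  corresponds to the paper's index n = k + 1 (so N = {1,2,...} is shifted to {0,1,...}).\<close>

definition ell2 :: "(nat \<Rightarrow> real) \<Rightarrow> bool" where
  "ell2 u \<longleftrightarrow> summable (\<lambda>k. (u k)\<^sup>2)"

text \<open>Periodic coefficients: c_n = c1 for odd n, c2 for even n; with n = k + 1.\<close>
definition jcoef :: "real \<Rightarrow> real \<Rightarrow> nat \<Rightarrow> real" where
  "jcoef c1 c2 k = (if even k then c1 else c2)"

definition jlam :: "real \<Rightarrow> real \<Rightarrow> nat \<Rightarrow> real" where
  "jlam c1 c2 k = jcoef c1 c2 k * real (k + 1)"

definition jac_apply :: "real \<Rightarrow> real \<Rightarrow> (nat \<Rightarrow> real) \<Rightarrow> nat \<Rightarrow> real" where
  "jac_apply c1 c2 u k =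
     (if k = 0 then 0 else jlam c1 c2 (k - 1) * u (k - 1))
     + real (k + 1) * u k + jlam c1 c2 k * u (k + 1)"

definition jac_dom :: "real \<Rightarrow> real \<Rightarrow> (nat \<Rightarrow> real) set" where
  "jac_dom c1 c2 = {u. ell2 u \<and> ell2 (jac_apply c1 c2 u)}"

definition semibounded_below :: "real \<Rightarrow> real \<Rightarrow> bool" where
  "semibounded_below c1 c2 \<longleftrightarrow> (\<exists>C. \<forall>u\<in>jac_dom c1 c2.
      C * (\<Sum>k. (u k)\<^sup>2) \<le> (\<Sum>k. jac_apply c1 c2 u k * u k))"

definition semibounded_above :: "real \<Rightarrow> real \<Rightarrow> bool" where
  "semibounded_above c1 c2 \<longleftrightarrow> (\<exists>C. \<forall>u\<in>jac_dom c1 c2.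
      (\<Sum>k. jac_apply c1 c2 u k * u k) \<le> C * (\<Sum>k. (u k)\<^sup>2))"

definition semibounded :: "real \<Rightarrow> real \<Rightarrow> bool" where
  "semibounded c1 c2 \<longleftrightarrow> semibounded_below c1 c2 \<or> semibounded_above c1 c2"

end

theory Submission
  imports Defs "HOL-Analysis.Summation_Tests"
begin

text \<open>
  Write \<open>s = \<bar>c1\<bar> + \<bar>c2\<bar>\<close> and \<open>Q(u) = \<Sum>\<^sub>k (Ju)\<^sub>k u\<^sub>k\<close>.
  Since the diagonal grows like \<open>n\<close>, unit vectors make \<open>Q(e\<^sub>n) = n\<close>, so \<open>J\<close> is never bounded above.
  On a block \<open>[a, a + n + 1]\<close> take the vector \<open>\<plusminus>1\<close> whose signs make every off-diagonal
  term negative; at each interior index the contribution is \<open>k + 1 - \<bar>c\<^sub>k\<^sub>-\<^sub>1\<bar>k - \<bar>c\<^sub>k\<bar>(k + 1) \<le> 1 - (s - 1)a\<close>,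
  so for \<open>s > 1\<close> a long block far out has very negative form relative to its norm.

  For \<open>s \<le> 1\<close> one has \<open>\<bar>\<lambda>\<^sub>k\<bar> + \<bar>\<lambda>\<^sub>k\<^sub>+\<^sub>1\<bar> \<le> k + 2\<close>, so completing squares edge by edge gives the
  partial-sum bound \<open>\<Sum>\<^sub>k\<^sub>\<le>\<^sub>N (Ju)\<^sub>k u\<^sub>k \<ge> -(N + 1)\<bar>u\<^sub>N u\<^sub>N\<^sub>+\<^sub>1\<bar>\<close>. If \<open>Q(u) < 0\<close>, then
  \<open>\<bar>u\<^sub>N u\<^sub>N\<^sub>+\<^sub>1\<bar>\<close> would eventually dominate a multiple of \<open>1/(N + 1)\<close>, contradicting its
  summability for \<open>u \<in> l\<^sup>2\<close>.
\<close>

lemma summable_abs_mult_ell2: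
  assumes "ell2 u" "ell2 v"
  shows "summable (\<lambda>k. \<bar>u k * v k\<bar>)"
proof (rule summable_comparison_test[of _ "\<lambda>k. ((u k)\<^sup>2 + (v k)\<^sup>2) / 2"])
  show "\<exists>N. \<forall>n\<ge>N. norm \<bar>u n * v n\<bar> \<le> ((u n)\<^sup>2 + (v n)\<^sup>2) / 2"
  proof (intro exI allI impI)
    fix n
    show "norm \<bar>u n * v n\<bar> \<le> ((u n)\<^sup>2 + (v n)\<^sup>2) / 2"
      using sum_squares_bound[of "\<bar>u n\<bar>" "\<bar>v n\<bar>"] by (simp add: abs_mult power2_eq_square)
  qed
  show "summable (\<lambda>k. ((u k)\<^sup>2 + (v k)\<^sup>2) / 2)"
    using assms unfolding ell2_def by (intro summable_divide summable_add)
qed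

lemma suminf_nonneg_of_partial_sums_ge:
  fixes a b :: "nat \<Rightarrow> real"
  assumes "summable a" "summable b"
    and partial: "\<And>N. - (real (Suc N) * b N) \<le> (\<Sum>k<Suc N. a k)"
  shows "0 \<le> suminf a"
proof (rule ccontr)
  define e where "e = - suminf a / 2"
  assume "\<not> 0 \<le> suminf a"
  then have e_pos: "e > 0" by (simp add: e_def)
  have "(\<lambda>N. \<Sum>k<Suc N. a k) \<longlonglongrightarrow> suminf a"
    using assms(1) by (intro LIMSEQ_Suc summable_LIMSEQ)
  then have "eventually (\<lambda>N. (\<Sum>k<Suc N. a k) < suminf a / 2) sequentially"
    using e_pos by (intro order_tendstoD) (auto simp: e_def)
  then have "eventually (\<lambda>N. norm (e * inverse (real (Suc N))) \<le> b N) sequentially"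
  proof eventually_elim
    case (elim N)
    then have "e < real (Suc N) * b N" using partial[of N] by (simp add: e_def)
    then show ?case using e_pos by (simp add: field_simps)
  qed
  then have "summable (\<lambda>N. e * inverse (real (Suc N)))"
    using assms(2) by (rule summable_comparison_test_ev)
  then have "summable (\<lambda>N. inverse (real N))"
    using e_pos summable_Suc_iff[where f = "\<lambda>N. inverse (real N)"] by simp
  then show False using not_summable_harmonic[where 'a = real] by simp
qed

lemma abs_quadratic_form_nonneg:
  fixes l x y :: real
  shows "0 \<le> \<bar>l\<bar> * x\<^sup>2 + 2 * l * x * y + \<bar>l\<bar> * y\<^sup>2"
proof (cases "l \<ge> 0")
  case True
  then have "\<bar>l\<bar> * x\<^sup>2 + 2 * l * x * y + \<bar>l\<bar> * y\<^sup>2 = l * (x + y)\<^sup>2"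
    by (simp add: power2_eq_square algebra_simps)
  then show ?thesis using True by simp
next
  case False
  then have "\<bar>l\<bar> * x\<^sup>2 + 2 * l * x * y + \<bar>l\<bar> * y\<^sup>2 = - l * (x - y)\<^sup>2"
    by (simp add: power2_eq_square algebra_simps)
  then show ?thesis using False by (simp add: mult_nonpos_nonneg)
qed

lemma abs_jcoef_add_Suc: "\<bar>jcoef c1 c2 k\<bar> + \<bar>jcoef c1 c2 (Suc k)\<bar> = \<bar>c1\<bar> + \<bar>c2\<bar>"
  by (simp add: jcoef_def)

lemma abs_jlam: "\<bar>jlam c1 c2 k\<bar> = \<bar>jcoef c1 c2 k\<bar> * real (Suc k)"
  by (simp add: jlam_def abs_mult)

context
  fixes c1 c2 :: real
  assumes small: "\<bar>c1\<bar> + \<bar>c2\<bar> \<le> 1"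
begin

lemma abs_jlam_le: "\<bar>jlam c1 c2 k\<bar> \<le> real (Suc k)"
  using small by (auto simp: abs_jlam jcoef_def intro: mult_left_le_one_le)

lemma abs_jlam_add_Suc_le: "\<bar>jlam c1 c2 k\<bar> + \<bar>jlam c1 c2 (Suc k)\<bar> \<le> real (k + 2)"
proof -
  have "\<bar>jlam c1 c2 k\<bar> + \<bar>jlam c1 c2 (Suc k)\<bar>
      \<le> (\<bar>jcoef c1 c2 k\<bar> + \<bar>jcoef c1 c2 (Suc k)\<bar>) * real (k + 2)"
    by (simp add: abs_jlam algebra_simps)
  also have "\<dots> \<le> real (k + 2)"
    using small by (simp add: abs_jcoef_add_Suc mult_left_le_one_le)
  finally show ?thesis .
qed

lemma jac_partial_sum_minus_edge_ge:
  "\<bar>jlam c1 c2 N\<bar> * (u N)\<^sup>2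
     \<le> (\<Sum>k<Suc N. jac_apply c1 c2 u k * u k) - jlam c1 c2 N * u N * u (Suc N)"
proof (induction N)
  case 0
  have "\<bar>jlam c1 c2 0\<bar> * (u 0)\<^sup>2 \<le> (u 0)\<^sup>2"
    using abs_jlam_le[of 0] by (intro mult_left_le_one_le) auto
  then show ?case by (simp add: jac_apply_def power2_eq_square algebra_simps)
next
  case (Suc N)
  let ?l = "jlam c1 c2 N"
  have step: "(\<Sum>k<Suc (Suc N). jac_apply c1 c2 u k * u k) - jlam c1 c2 (Suc N) * u (Suc N) * u (Suc (Suc N))
    = ((\<Sum>k<Suc N. jac_apply c1 c2 u k * u k) - ?l * u N * u (Suc N))
      + 2 * ?l * u N * u (Suc N) + real (N + 2) * (u (Suc N))\<^sup>2"
    by (simp add: jac_apply_def power2_eq_square algebra_simps)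
  have "\<bar>jlam c1 c2 (Suc N)\<bar> * (u (Suc N))\<^sup>2 \<le> (real (N + 2) - \<bar>?l\<bar>) * (u (Suc N))\<^sup>2"
    using abs_jlam_add_Suc_le[of N] by (intro mult_right_mono) auto
  then show ?case
    using Suc.IH abs_quadratic_form_nonneg[of ?l "u N" "u (Suc N)"] step
    by (simp add: algebra_simps)
qed

lemma jac_partial_sum_ge:
  "- (real (Suc N) * \<bar>u N * u (Suc N)\<bar>) \<le> (\<Sum>k<Suc N. jac_apply c1 c2 u k * u k)"
proof -
  have "- (real (Suc N) * \<bar>u N * u (Suc N)\<bar>) \<le> - (\<bar>jlam c1 c2 N\<bar> * \<bar>u N * u (Suc N)\<bar>)"
    using abs_jlam_le[of N] by (simp add: mult_right_mono)
  also have "\<dots> \<le> jlam c1 c2 N * u N * u (Suc N)"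
    using abs_ge_minus_self[of "jlam c1 c2 N * (u N * u (Suc N))"] by (simp add: abs_mult mult.assoc)
  also have "\<dots> \<le> (\<Sum>k<Suc N. jac_apply c1 c2 u k * u k)"
    using jac_partial_sum_minus_edge_ge[of N u]
      mult_nonneg_nonneg[OF abs_ge_zero[of "jlam c1 c2 N"] zero_le_power2[of "u N"]]
    by linarith
  finally show ?thesis .
qed

lemma jac_form_nonneg:
  assumes "u \<in> jac_dom c1 c2"
  shows "0 \<le> (\<Sum>k. jac_apply c1 c2 u k * u k)"
proof -
  have u: "ell2 u" and Ju: "ell2 (jac_apply c1 c2 u)" using assms by (auto simp: jac_dom_def)
  have "ell2 (\<lambda>k. u (Suc k))"
    using u unfolding ell2_def by (subst summable_Suc_iff[where f = "\<lambda>k. (u k)\<^sup>2"])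
  then have "summable (\<lambda>N. \<bar>u N * u (Suc N)\<bar>)" using u by (rule summable_abs_mult_ell2[rotated])
  moreover have "summable (\<lambda>k. jac_apply c1 c2 u k * u k)"
    using summable_abs_mult_ell2[OF Ju u] by (rule summable_rabs_cancel)
  ultimately show ?thesis using jac_partial_sum_ge by (intro suminf_nonneg_of_partial_sums_ge)
qed

end

text \<open>The signs are chosen so that every off-diagonal term \<open>\<lambda>\<^sub>k t\<^sub>k t\<^sub>k\<^sub>+\<^sub>1\<close> equals \<open>-\<bar>\<lambda>\<^sub>k\<bar>\<close>.\<close>

fun alt_sign :: "real \<Rightarrow> real \<Rightarrow> nat \<Rightarrow> real" where
  "alt_sign c1 c2 0 = 1"
| "alt_sign c1 c2 (Suc k) = - sgn (jcoef c1 c2 k) * alt_sign c1 c2 k"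

definition test_vec :: "real \<Rightarrow> real \<Rightarrow> nat \<Rightarrow> nat \<Rightarrow> nat \<Rightarrow> real" where
  "test_vec c1 c2 a b k = (if k \<in> {a..b} then alt_sign c1 c2 k else 0)"

context
  fixes c1 c2 :: real
  assumes nonzero: "c1 \<noteq> 0" "c2 \<noteq> 0"
begin

lemma alt_sign_square: "alt_sign c1 c2 k * alt_sign c1 c2 k = 1"
proof (induction k)
  case (Suc k)
  have "sgn (jcoef c1 c2 k) * sgn (jcoef c1 c2 k) = 1"
    using nonzero by (simp add: jcoef_def sgn_if)
  then show ?case using Suc by (simp add: algebra_simps)
qed simp

lemma jlam_mult_alt_sign:
  "jlam c1 c2 k * alt_sign c1 c2 k * alt_sign c1 c2 (Suc k) = - \<bar>jlam c1 c2 k\<bar>"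
proof -
  have "jlam c1 c2 k * alt_sign c1 c2 k * alt_sign c1 c2 (Suc k)
      = - (jcoef c1 c2 k * sgn (jcoef c1 c2 k)) * real (Suc k) * (alt_sign c1 c2 k * alt_sign c1 c2 k)"
    by (simp add: jlam_def algebra_simps)
  also have "\<dots> = - \<bar>jcoef c1 c2 k\<bar> * real (Suc k)"
    by (simp add: alt_sign_square sgn_if)
  finally show ?thesis by (simp add: abs_jlam)
qed

lemma test_vec_in_jac_dom: "test_vec c1 c2 a b \<in> jac_dom c1 c2"
proof -
  have "ell2 (test_vec c1 c2 a b)" unfolding ell2_def
    by (rule summable_finite[of "{a..b}"]) (auto simp: test_vec_def)
  moreover have "ell2 (jac_apply c1 c2 (test_vec c1 c2 a b))" unfolding ell2_def
    by (rule summable_finite[of "{..Suc b}"]) (auto simp: jac_apply_def test_vec_def)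
  ultimately show ?thesis by (simp add: jac_dom_def)
qed

lemma suminf_test_vec_square: "(\<Sum>k. (test_vec c1 c2 a b k)\<^sup>2) = real (Suc b - a)"
proof -
  have "(\<Sum>k. (test_vec c1 c2 a b k)\<^sup>2) = (\<Sum>k\<in>{a..b}. (test_vec c1 c2 a b k)\<^sup>2)"
    by (rule suminf_finite) (auto simp: test_vec_def)
  also have "\<dots> = (\<Sum>k\<in>{a..b}. 1)"
    by (rule sum.cong) (auto simp: test_vec_def power2_eq_square alt_sign_square)
  finally show ?thesis by simp
qed

lemma jac_form_test_vec:
  "(\<Sum>k. jac_apply c1 c2 (test_vec c1 c2 a b) k * test_vec c1 c2 a b k)
     = (\<Sum>k\<in>{a..b}. jac_apply c1 c2 (test_vec c1 c2 a b) k * test_vec c1 c2 a b k)"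
  by (rule suminf_finite) (auto simp: test_vec_def)

lemma jac_apply_test_vec_mult:
  assumes k: "a \<le> k" "k \<le> b"
  shows "jac_apply c1 c2 (test_vec c1 c2 a b) k * test_vec c1 c2 a b k
     = real (Suc k) - (if a < k then \<bar>jlam c1 c2 (k - 1)\<bar> else 0)
         - (if k < b then \<bar>jlam c1 c2 k\<bar> else 0)"
proof -
  let ?t = "test_vec c1 c2 a b" and ?s = "alt_sign c1 c2"
  have left: "(if k = 0 then 0 else jlam c1 c2 (k - 1) * ?t (k - 1)) * ?s k
      = - (if a < k then \<bar>jlam c1 c2 (k - 1)\<bar> else 0)"
  proof (cases "a < k")
    case True
    then obtain j where "k = Suc j" "a \<le> j" by (cases k) auto
    then show ?thesis using jlam_mult_alt_sign[of j] k by (simp add: test_vec_def del: alt_sign.simps)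
  qed (use k in \<open>auto simp: test_vec_def\<close>)
  have right: "jlam c1 c2 k * ?t (Suc k) * ?s k = - (if k < b then \<bar>jlam c1 c2 k\<bar> else 0)"
    using jlam_mult_alt_sign[of k] k
    by (auto simp: test_vec_def algebra_simps simp del: alt_sign.simps)
  have "jac_apply c1 c2 ?t k * ?t k
     = (if k = 0 then 0 else jlam c1 c2 (k - 1) * ?t (k - 1)) * ?s k
       + real (Suc k) * (?s k * ?s k) + jlam c1 c2 k * ?t (Suc k) * ?s k"
    using k by (simp add: jac_apply_def test_vec_def algebra_simps)
  then show ?thesis using left right alt_sign_square[of k] by simp
qed

lemma jac_form_unit_vec:
  "(\<Sum>k. jac_apply c1 c2 (test_vec c1 c2 a a) k * test_vec c1 c2 a a k) = real (Suc a)"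
  unfolding jac_form_test_vec by (simp add: jac_apply_test_vec_mult)

lemma not_semibounded_above: "\<not> semibounded_above c1 c2"
proof
  assume "semibounded_above c1 c2"
  then obtain C where C: "\<And>u. u \<in> jac_dom c1 c2 \<Longrightarrow>
      (\<Sum>k. jac_apply c1 c2 u k * u k) \<le> C * (\<Sum>k. (u k)\<^sup>2)"
    unfolding semibounded_above_def by blast
  define a where "a = nat \<lceil>C\<rceil>"
  have "real (Suc a) \<le> C"
    using C[OF test_vec_in_jac_dom, of a a] by (simp add: jac_form_unit_vec suminf_test_vec_square)
  moreover have "C \<le> real a" unfolding a_def by linarith
  ultimately show False by simp
qed

lemma jac_form_block_le:
  assumes large: "1 \<le> \<bar>c1\<bar> + \<bar>c2\<bar>"
  shows "(\<Sum>k. jac_apply c1 c2 (test_vec c1 c2 a (Suc (a + n))) k * test_vec c1 c2 a (Suc (a + n)) k)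
    \<le> 2 * real (a + n + 2) + real n * (1 - (\<bar>c1\<bar> + \<bar>c2\<bar> - 1) * real a)"
proof -
  let ?b = "Suc (a + n)"
  let ?T = "\<lambda>k. jac_apply c1 c2 (test_vec c1 c2 a ?b) k * test_vec c1 c2 a ?b k"
  have boundary: "?T k \<le> real (a + n + 2)" if "a \<le> k" "k \<le> ?b" for k
    using jac_apply_test_vec_mult[OF that] that by auto
  have interior: "?T k \<le> 1 - (\<bar>c1\<bar> + \<bar>c2\<bar> - 1) * real a" if k: "Suc a \<le> k" "k \<le> a + n" for k
  proof -
    obtain j where j: "k = Suc j" using k by (cases k) auto
    have "?T k = real (Suc k) - \<bar>jlam c1 c2 j\<bar> - \<bar>jlam c1 c2 k\<bar>"
      using jac_apply_test_vec_mult[of a k ?b] k j by simp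
    also have "\<dots> = real (Suc k) - \<bar>jcoef c1 c2 j\<bar> * real k - \<bar>jcoef c1 c2 k\<bar> * real (Suc k)"
      using j by (simp only: abs_jlam)
    also have "\<dots> \<le> real (Suc k) - (\<bar>jcoef c1 c2 j\<bar> + \<bar>jcoef c1 c2 k\<bar>) * real k"
      by (simp add: algebra_simps)
    also have "\<dots> = 1 - (\<bar>c1\<bar> + \<bar>c2\<bar> - 1) * real k"
      using abs_jcoef_add_Suc[of c1 c2 j] j by (simp add: algebra_simps)
    also have "\<dots> \<le> 1 - (\<bar>c1\<bar> + \<bar>c2\<bar> - 1) * real a"
      using large k by (intro diff_left_mono mult_left_mono) auto
    finally show ?thesis .
  qed
  have "(\<Sum>k\<in>{a..?b}. ?T k) = ?T a + (\<Sum>k\<in>{Suc a..a + n}. ?T k) + ?T ?b"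
    by (simp add: sum.atLeast_Suc_atMost)
  also have "\<dots> \<le> real (a + n + 2) + real n * (1 - (\<bar>c1\<bar> + \<bar>c2\<bar> - 1) * real a) + real (a + n + 2)"
    using sum_mono[of "{Suc a..a + n}" ?T "\<lambda>_. 1 - (\<bar>c1\<bar> + \<bar>c2\<bar> - 1) * real a"]
      interior boundary[of a] boundary[of ?b]
    by (intro add_mono) auto
  finally show ?thesis unfolding jac_form_test_vec by simp
qed

lemma not_semibounded_below:
  assumes large: "1 < \<bar>c1\<bar> + \<bar>c2\<bar>"
  shows "\<not> semibounded_below c1 c2"
proof
  assume "semibounded_below c1 c2"
  then obtain C where C: "\<And>u. u \<in> jac_dom c1 c2 \<Longrightarrow>
      C * (\<Sum>k. (u k)\<^sup>2) \<le> (\<Sum>k. jac_apply c1 c2 u k * u k)"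
    unfolding semibounded_below_def by blast
  define d where "d = \<bar>c1\<bar> + \<bar>c2\<bar> - 1"
  define n where "n = nat \<lceil>3 / d\<rceil>"
  define a where "a = nat \<lceil>\<bar>C\<bar> * real (n + 2) + 3 * real n + 5\<rceil>"
  have "d > 0" using large by (simp add: d_def)
  moreover have "3 / d \<le> real n" unfolding n_def by linarith
  ultimately have "3 \<le> real n * d" by (simp add: field_simps)
  then have "3 * real a \<le> real n * (d * real a)" by (simp add: mult.assoc[symmetric] mult_right_mono)
  have "C * real (n + 2) \<le> 2 * real (a + n + 2) + real n * (1 - d * real a)"
    using C[OF test_vec_in_jac_dom, of a "Suc (a + n)"] jac_form_block_le[of a n] large
    by (simp add: suminf_test_vec_square d_def)
  also have "\<dots> \<le> 3 * real n + 4 - real a"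
    using \<open>3 * real a \<le> real n * (d * real a)\<close> by (simp add: algebra_simps)
  also have "\<dots> < - \<bar>C\<bar> * real (n + 2)" unfolding a_def by linarith
  moreover have "- \<bar>C\<bar> * real (n + 2) \<le> C * real (n + 2)" by (intro mult_right_mono) auto
  ultimately show False by linarith
qed

end

theorem theorem2:
  fixes c1 c2 :: real
  assumes "c1 * c2 \<noteq> 0"
  shows "(\<bar>c1\<bar> + \<bar>c2\<bar> > 1 \<longrightarrow> \<not> semibounded c1 c2)
       \<and> (\<bar>c1\<bar> + \<bar>c2\<bar> \<le> 1 \<longrightarrow> semibounded_below c1 c2)"
proof (intro conjI impI)
  have nonzero: "c1 \<noteq> 0" "c2 \<noteq> 0" using assms by auto
  show "\<not> semibounded c1 c2" if "\<bar>c1\<bar> + \<bar>c2\<bar> > 1"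
    using not_semibounded_above[OF nonzero] not_semibounded_below[OF nonzero that]
    unfolding semibounded_def by blast
  show "semibounded_below c1 c2" if "\<bar>c1\<bar> + \<bar>c2\<bar> \<le> 1"
    unfolding semibounded_below_def using jac_form_nonneg[OF that] by (intro exI[of _ 0]) simp
qed

end
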